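(* The statistics $(2\text{-}31)$ and $(13\text{-}2)$ are constant on every orbit of $\mathfrak{S}_n$ under the modified Foata–Strehl action.
   Context: For $\pi=a_1\cdots a_n\in\mathfrak{S}_n$: $(2\text{-}31)(\pi)$ is the number of pairs $1\le i<j\le n-1$ with $a_{j+1}<a_i<a_j$, and $(13\text{-}2)(\pi)$ is the number of pairs $2\le i<j\le n$ with $a_{i-1}<a_j<a_i$. Set $a_0=a_{n+1}=n+1$. A letter $a_k$ is a valley if $a_{k-1}>a_k<a_{k+1}$, a peak if $a_{k-1}<a_k>a_{k+1}$, a double ascent if $a_{k-1}<a_k<a_{k+1}$, a double descent if $a_{k-1}>a_k>a_{k+1}$. For $x\in[n]$: if $x$ is a double descent, $\varphi'_x(\pi)$ moves $x$ to between the first pair of consecutive letters $a_i,a_{i+1}$ to the right of $x$ with $a_i<x<a_{i+1}$; if a double ascent, to between the first pair $a_i,a_{i+1}$ to the left of $x$ with $a_i>x>a_{i+1}$; if a peak or valley, $\varphi'_x(\pi)=\pi$. The modified Foata–Strehl action is the $\mathbb{Z}_2^n$-action generated by the commuting involutions $\varphi'_x$, $x\in[n]$. *)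

theory Defs
  imports Main
begin

text \<open>A permutation a_1 ... a_n of [n] is a list of length n (0-based list index k-1 holds a_k).\<close>

definition perms :: "nat \<Rightarrow> nat list set" where
  "perms n = {xs. distinct xs \<and> set xs = {1..n}}"

text \<open>Extended word a_0 a_1 ... a_n a_(n+1) with a_0 = a_(n+1) = n+1; its index k holds a_k.\<close>
definition ext :: "nat list \<Rightarrow> nat list" where
  "ext xs = (length xs + 1) # xs @ [length xs + 1]"

definition letter :: "nat list \<Rightarrow> nat \<Rightarrow> nat" where
  "letter xs k = ext xs ! k"

definition st_2_31 :: "nat list \<Rightarrow> nat" where
  "st_2_31 xs = card {(i, j). 1 \<le> i \<and> i < j \<and> j \<le> length xs - 1 \<and>
      letter xs (j + 1) < letter xs i \<and> letter xs i < letter xs j}"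

definition st_13_2 :: "nat list \<Rightarrow> nat" where
  "st_13_2 xs = card {(i, j). 2 \<le> i \<and> i < j \<and> j \<le> length xs \<and>
      letter xs (i - 1) < letter xs j \<and> letter xs j < letter xs i}"

definition pos :: "nat list \<Rightarrow> nat \<Rightarrow> nat" where
  "pos xs x = (LEAST k. 1 \<le> k \<and> k \<le> length xs \<and> xs ! (k - 1) = x)"

definition double_descent :: "nat list \<Rightarrow> nat \<Rightarrow> bool" where
  "double_descent xs x \<longleftrightarrow> letter xs (pos xs x - 1) > x \<and> x > letter xs (pos xs x + 1)"

definition double_ascent :: "nat list \<Rightarrow> nat \<Rightarrow> bool" where
  "double_ascent xs x \<longleftrightarrow> letter xs (pos xs x - 1) < x \<and> x < letter xs (pos xs x + 1)"

text \<open>For a double descent x = a_p, let i be the least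
  index i > p (i \<le> n) with a_i < x < a_(i+1); x is moved between a_i and a_(i+1).
  For a double ascent, let i be the greatest index i with i + 1 < p and a_i > x > a_(i+1);
  x is moved between a_i and a_(i+1).\<close>
definition phi' :: "nat \<Rightarrow> nat list \<Rightarrow> nat list" where
  "phi' x xs =
    (let p = pos xs x; ys = remove1 x xs in
     if double_descent xs x then
       (let i = Min {i. p < i \<and> i \<le> length xs \<and> letter xs i < x \<and> x < letter xs (i + 1)}
        in take (i - 1) ys @ x # drop (i - 1) ys)
     else if double_ascent xs x then
       (let i = Max {i. i + 1 < p \<and> letter xs i > x \<and> x > letter xs (i + 1)}
        in take i ys @ x # drop i ys)
     else xs)"

text \<open>One generator step of the action on S_n, and the orbit of a permutation: since the
  generators are involutions, the orbit under the generated group is the reflexive-transitive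
  closure of the generator steps.\<close>
definition fs_step :: "nat \<Rightarrow> nat list \<Rightarrow> nat list \<Rightarrow> bool" where
  "fs_step n \<sigma> \<tau> \<longleftrightarrow> (\<exists>x\<in>{1..n}. \<tau> = phi' x \<sigma>)"

definition fs_orbit :: "nat \<Rightarrow> nat list \<Rightarrow> nat list set" where
  "fs_orbit n \<pi> = {\<sigma>. (fs_step n)\<^sup>*\<^sup>* \<pi> \<sigma>}"

end

theory Submission
  imports Defs
begin

text \<open>
  (2-31) counts, for each letter y, the adjacent descents a b to the right of y with b < y < a,
  and (13-2) is the same count for the reversed word. A generator \<open>phi' x\<close> either fixes the
  word or lets x hop over a nonempty block B of letters smaller than x whose outer neighbours
  (possibly the sentinels n+1) are larger than x. A hop changes no count. For a letter y \<noteq> x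
  before x, let l be the left neighbour of x and b the first letter of B: since b < x < l, the
  pairs l x and x b together straddle y exactly when l b does, while at the far end of B the
  letter x is inserted into an ascent. The letter x itself straddles no adjacent pair of B
  followed by the larger letter after B. Reversal turns a hop into a hop of the same kind.
\<close>

fun straddling_descents :: "'a::linorder \<Rightarrow> 'a list \<Rightarrow> nat" where
  "straddling_descents y (a # b # r) =
     (if b < y \<and> y < a then 1 else 0) + straddling_descents y (b # r)"
| "straddling_descents y _ = 0"

fun count_2_31 :: "'a::linorder list \<Rightarrow> nat" where
  "count_2_31 [] = 0"
| "count_2_31 (y # ys) = straddling_descents y ys + count_2_31 ys"

lemma straddling_descents_snoc:
  "straddling_descents y (u @ [b]) =
     straddling_descents y u + (if u \<noteq> [] \<and> b < y \<and> y < last u then 1 else 0)"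
  by (induction y u rule: straddling_descents.induct) auto

lemma straddling_descents_append_Cons:
  "straddling_descents y (u @ b # v) =
     straddling_descents y (u @ [b]) + straddling_descents y (b # v)"
  by (induction y u rule: straddling_descents.induct) auto

lemma straddling_descents_insert_into_ascent:
  assumes "u \<noteq> [] \<longrightarrow> last u < x" and "v \<noteq> [] \<longrightarrow> x < hd v"
  shows "straddling_descents y (u @ x # v) = straddling_descents y (u @ v)"
proof (cases v)
  case Nil
  then show ?thesis using assms by (auto simp: straddling_descents_snoc)
next
  case (Cons c r)
  then show ?thesis using assms
    by (auto simp: straddling_descents_append_Cons[of y u x]
        straddling_descents_append_Cons[of y u c] straddling_descents_snoc)
qed

lemma straddling_descents_all_lower:
  "\<forall>b\<in>set B. b < y \<Longrightarrow> straddling_descents y B = 0"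
  by (induction y B rule: straddling_descents.induct) auto

lemma straddling_descents_drop_lower_prefix:
  assumes "\<forall>b\<in>set B. b < y" and "v \<noteq> [] \<longrightarrow> y < hd v"
  shows "straddling_descents y (B @ v) = straddling_descents y v"
proof (cases v)
  case Nil
  then show ?thesis using assms straddling_descents_all_lower by simp
next
  case (Cons c r)
  then show ?thesis using assms straddling_descents_all_lower[OF assms(1)]
    by (auto simp: straddling_descents_append_Cons[of y B c] straddling_descents_snoc)
qed

lemma count_2_31_insert_after_lower:
  assumes "\<forall>b\<in>set B. b < x" and "v \<noteq> [] \<longrightarrow> x < hd v"
  shows "count_2_31 (B @ x # v) = count_2_31 (B @ v) + straddling_descents x v"
  using assms
proof (induction B)
  case Nil
  then show ?case by simp
next
  case (Cons b B)
  have "straddling_descents b (B @ x # v) = straddling_descents b (B @ v)"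
    using Cons.prems by (intro straddling_descents_insert_into_ascent) auto
  then show ?case using Cons by simp
qed

lemma straddling_descents_hop:
  assumes "y \<noteq> x" and "if u = [] then x < y else x < last u"
    and "\<forall>b\<in>set B. b < x" and "v \<noteq> [] \<longrightarrow> x < hd v"
  shows "straddling_descents y (u @ x # B @ v) = straddling_descents y (u @ B @ x # v)"
proof (cases B)
  case Nil
  then show ?thesis by simp
next
  case (Cons b B')
  have "b < x" using assms(3) Cons by simp
  have "straddling_descents y (u @ B @ x # v) = straddling_descents y (u @ B @ v)"
    using straddling_descents_insert_into_ascent[of "u @ B" x v y] assms Cons by simp
  also have "\<dots> = straddling_descents y (u @ [b]) + straddling_descents y (B @ v)"
    using straddling_descents_append_Cons[of y u b "B' @ v"] Cons by simp
  also have "\<dots> = straddling_descents y (u @ [x]) + straddling_descents y (x # B @ v)"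
    using assms \<open>b < x\<close> Cons by (cases "u = []") (auto simp: straddling_descents_snoc)
  also have "\<dots> = straddling_descents y (u @ x # B @ v)"
    using straddling_descents_append_Cons[of y u x "B @ v"] by simp
  finally show ?thesis ..
qed

definition hoppable :: "'a::linorder list \<Rightarrow> 'a \<Rightarrow> 'a list \<Rightarrow> 'a list \<Rightarrow> bool" where
  "hoppable u x B v \<longleftrightarrow> (\<forall>b\<in>set B. b < x) \<and> (u \<noteq> [] \<longrightarrow> x < last u) \<and>
     (v \<noteq> [] \<longrightarrow> x < hd v) \<and> x \<notin> set u \<and> x \<notin> set v"

lemma hoppable_rev: "hoppable u x B v \<Longrightarrow> hoppable (rev v) x (rev B) (rev u)"
  by (auto simp: hoppable_def last_rev hd_rev)

lemma count_2_31_hop: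
  "hoppable u x B v \<Longrightarrow> count_2_31 (u @ x # B @ v) = count_2_31 (u @ B @ x # v)"
proof (induction u)
  case Nil
  then show ?case
    using count_2_31_insert_after_lower[of B x v] straddling_descents_drop_lower_prefix[of B x v]
    by (simp add: hoppable_def)
next
  case (Cons a u)
  have "hoppable u x B v" using Cons.prems by (auto simp: hoppable_def)
  moreover have "straddling_descents a (u @ x # B @ v) = straddling_descents a (u @ B @ x # v)"
    using Cons.prems by (intro straddling_descents_hop) (auto simp: hoppable_def)
  ultimately show ?case using Cons.IH by simp
qed

definition straddle_positions :: "'a::linorder \<Rightarrow> 'a list \<Rightarrow> nat set" where
  "straddle_positions y ws = {j. Suc j < length ws \<and> ws ! Suc j < y \<and> y < ws ! j}"

definition occs_2_31 :: "'a::linorder list \<Rightarrow> (nat \<times> nat) set" where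
  "occs_2_31 xs = {(i, j). i < j \<and> Suc j < length xs \<and> xs ! Suc j < xs ! i \<and> xs ! i < xs ! j}"

lemma finite_straddle_positions: "finite (straddle_positions y ws)"
  by (rule finite_subset[of _ "{..<length ws}"]) (auto simp: straddle_positions_def)

lemma finite_occs_2_31: "finite (occs_2_31 xs)"
  by (rule finite_subset[of _ "{..<length xs} \<times> {..<length xs}"]) (auto simp: occs_2_31_def)

lemma straddle_positions_Cons_Cons:
  "straddle_positions y (a # b # r) =
     (if b < y \<and> y < a then {0} else {}) \<union> Suc ` straddle_positions y (b # r)"
proof (intro equalityI subsetI)
  fix j assume "j \<in> straddle_positions y (a # b # r)"
  then show "j \<in> (if b < y \<and> y < a then {0} else {}) \<union> Suc ` straddle_positions y (b # r)"
    by (cases j) (auto simp: straddle_positions_def)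
qed (auto simp: straddle_positions_def split: if_splits)

lemma card_straddle_positions: "card (straddle_positions y ws) = straddling_descents y ws"
proof (induction y ws rule: straddling_descents.induct)
  case (1 y a b r)
  then show ?case
    by (simp add: straddle_positions_Cons_Cons card_image finite_straddle_positions)
qed (simp_all add: straddle_positions_def)

lemma occs_2_31_Cons:
  "occs_2_31 (y # ys) =
     (\<lambda>j. (0, Suc j)) ` straddle_positions y ys \<union> map_prod Suc Suc ` occs_2_31 ys"
proof (intro equalityI subsetI)
  fix p assume p: "p \<in> occs_2_31 (y # ys)"
  then obtain i j where ij: "p = (i, j)" "i < j" by (auto simp: occs_2_31_def)
  then obtain j' where "j = Suc j'" by (cases j) auto
  with p ij show "p \<in> (\<lambda>j. (0, Suc j)) ` straddle_positions y ys \<union> map_prod Suc Suc ` occs_2_31 ys"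
    by (cases i) (auto simp: occs_2_31_def straddle_positions_def image_iff)
qed (auto simp: occs_2_31_def straddle_positions_def)

lemma card_occs_2_31: "card (occs_2_31 xs) = count_2_31 xs"
proof (induction xs)
  case Nil
  then show ?case by (simp add: occs_2_31_def)
next
  case (Cons y ys)
  have "inj_on (\<lambda>j. (0::nat, Suc j)) (straddle_positions y ys)"
    and "inj_on (map_prod Suc Suc) (occs_2_31 ys)"
    by (auto simp: inj_on_def)
  moreover have
    "(\<lambda>j. (0::nat, Suc j)) ` straddle_positions y ys \<inter> map_prod Suc Suc ` occs_2_31 ys = {}"
    by auto
  ultimately show ?case
    by (simp add: occs_2_31_Cons card_Un_disjoint card_image finite_straddle_positions
        finite_occs_2_31 card_straddle_positions Cons.IH)
qed

lemma letter_Suc: "k < length xs \<Longrightarrow> letter xs (Suc k) = xs ! k"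
  by (simp add: letter_def ext_def nth_append)

lemma st_2_31_eq_count_2_31: "st_2_31 xs = count_2_31 xs"
proof -
  have "bij_betw (map_prod Suc Suc) (occs_2_31 xs) {(i, j). 1 \<le> i \<and> i < j \<and> j \<le> length xs - 1 \<and>
      letter xs (j + 1) < letter xs i \<and> letter xs i < letter xs j}"
    by (rule bij_betw_byWitness[where f' = "map_prod (\<lambda>i. i - 1) (\<lambda>j. j - 1)"])
      (auto simp: occs_2_31_def letter_Suc Suc_le_eq dest!: less_imp_Suc_add)
  from bij_betw_same_card[OF this] show ?thesis
    unfolding st_2_31_def by (simp add: card_occs_2_31)
qed

lemma st_13_2_eq_count_2_31_rev: "st_13_2 xs = count_2_31 (rev xs)"
proof -
  let ?n = "length xs"
  let ?flip = "\<lambda>(i, j). (?n - j, ?n - i)"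
  let ?A = "{(i, j). 2 \<le> i \<and> i < j \<and> j \<le> length xs \<and>
      letter xs (i - 1) < letter xs j \<and> letter xs j < letter xs i}"
  have "?flip ` occs_2_31 (rev xs) \<subseteq> ?A"
  proof
    fix p assume "p \<in> ?flip ` occs_2_31 (rev xs)"
    then obtain a b where p: "p = (?n - b, ?n - a)" and ab: "(a, b) \<in> occs_2_31 (rev xs)" by auto
    then have "a < b" "Suc b < ?n" by (auto simp: occs_2_31_def)
    then have "2 \<le> ?n - b" "?n - b < ?n - a" by linarith+
    moreover have "letter xs (?n - b - 1) = rev xs ! Suc b" "letter xs (?n - a) = rev xs ! a"
      "letter xs (?n - b) = rev xs ! b"
      using \<open>a < b\<close> \<open>Suc b < ?n\<close> letter_Suc[of "?n - Suc (Suc b)" xs]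
        letter_Suc[of "?n - Suc a" xs] letter_Suc[of "?n - Suc b" xs]
      by (simp_all add: rev_nth Suc_diff_Suc)
    ultimately show "p \<in> ?A" using ab unfolding p by (auto simp: occs_2_31_def)
  qed
  moreover have "?flip ` ?A \<subseteq> occs_2_31 (rev xs)"
  proof
    fix p assume "p \<in> ?flip ` ?A"
    then obtain i j where p: "p = (?n - j, ?n - i)" and ij: "(i, j) \<in> ?A" by auto
    then have "2 \<le> i" "i < j" "j \<le> ?n" by auto
    then have "?n - j < ?n - i" "Suc (?n - i) < ?n" "?n - Suc (Suc (?n - i)) = i - 2" by linarith+
    moreover have "letter xs (i - 1) = rev xs ! Suc (?n - i)"
      "letter xs j = rev xs ! (?n - j)" "letter xs i = rev xs ! (?n - i)"
      using \<open>2 \<le> i\<close> \<open>i < j\<close> \<open>j \<le> ?n\<close> calculation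
        letter_Suc[of "i - 2" xs] letter_Suc[of "j - 1" xs] letter_Suc[of "i - 1" xs]
      by (simp_all add: rev_nth numeral_2_eq_2 Suc_diff_Suc)
    ultimately show "p \<in> occs_2_31 (rev xs)"
      using ij unfolding p by (auto simp: occs_2_31_def)
  qed
  ultimately have "bij_betw ?flip (occs_2_31 (rev xs)) ?A"
    by (intro bij_betw_byWitness[where f' = ?flip]) (auto simp: occs_2_31_def)
  from bij_betw_same_card[OF this] show ?thesis
    unfolding st_13_2_def by (simp add: card_occs_2_31)
qed

lemma hop_preserves_stats:
  assumes "hoppable u x B v"
  shows "st_2_31 (u @ x # B @ v) = st_2_31 (u @ B @ x # v)"
    and "st_13_2 (u @ x # B @ v) = st_13_2 (u @ B @ x # v)"
  using count_2_31_hop[OF assms] count_2_31_hop[OF hoppable_rev[OF assms]]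
  by (simp_all add: st_2_31_eq_count_2_31 st_13_2_eq_count_2_31_rev)

lemma letter_0: "letter xs 0 = Suc (length xs)"
  by (simp add: letter_def ext_def)

lemma letter_Suc_length: "letter xs (Suc (length xs)) = Suc (length xs)"
  by (simp add: letter_def ext_def nth_append)

lemma letter_length_prefix:
  "letter (u @ v) (length u) = (if u = [] then Suc (length (u @ v)) else last u)"
  by (cases u rule: rev_cases) (auto simp: letter_0 letter_Suc nth_append)

lemma letter_Suc_length_prefix:
  "letter (u @ v) (Suc (length u)) = (if v = [] then Suc (length (u @ v)) else hd v)"
  by (cases v) (auto simp: letter_Suc_length letter_Suc nth_append)

lemma letter_in_block:
  "k < length B \<Longrightarrow> letter (u @ B @ v) (Suc (length u + k)) = B ! k"
  by (simp add: letter_Suc nth_append)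

lemma pos_append_Cons:
  assumes "distinct (u @ x # v)"
  shows "pos (u @ x # v) x = Suc (length u)"
  unfolding pos_def
proof (rule Least_equality)
  fix k assume k: "1 \<le> k \<and> k \<le> length (u @ x # v) \<and> (u @ x # v) ! (k - 1) = x"
  then have "k - 1 = length u"
    using assms nth_eq_iff_index_eq[of "u @ x # v" "k - 1" "length u"] by (auto simp: nth_append)
  then show "Suc (length u) \<le> k" using k by linarith
qed (simp add: nth_append)

lemma letter_around_pos:
  assumes "distinct (u @ x # v)"
  shows "letter (u @ x # v) (pos (u @ x # v) x - 1) =
      (if u = [] then Suc (length (u @ x # v)) else last u)"
    and "letter (u @ x # v) (pos (u @ x # v) x + 1) =
      (if v = [] then Suc (length (u @ x # v)) else hd v)"
  using pos_append_Cons[OF assms] letter_length_prefix[of u "x # v"]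
    letter_Suc_length_prefix[of "u @ [x]" v]
  by simp_all

lemma Min_landing_after_block:
  fixes x :: nat
  assumes "B \<noteq> []" and "\<forall>b\<in>set B. b < x" and "v \<noteq> [] \<longrightarrow> x < hd v"
    and "x \<le> length (w @ B @ v)"
  shows "Min {i. length w < i \<and> i \<le> length (w @ B @ v) \<and>
      letter (w @ B @ v) i < x \<and> x < letter (w @ B @ v) (i + 1)} = length w + length B"
    (is "Min ?S = _")
proof (rule Min_eqI)
  show "finite ?S" by simp
  have "letter (w @ B @ v) (length w + length B) = last B"
    using letter_in_block[of "length B - 1" B w v] assms(1)
    by (cases "length B") (auto simp: last_conv_nth)
  moreover have "letter (w @ B @ v) (length w + length B + 1) =
      (if v = [] then Suc (length (w @ B @ v)) else hd v)"
    using letter_Suc_length_prefix[of "w @ B" v] by simp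
  ultimately show "length w + length B \<in> ?S" using assms by auto
next
  fix i assume i: "i \<in> ?S"
  show "length w + length B \<le> i"
  proof (rule ccontr)
    assume "\<not> ?thesis"
    with i have k: "i - length w < length B" and "i + 1 = Suc (length w + (i - length w))"
      by auto
    then have "letter (w @ B @ v) (i + 1) = B ! (i - length w)"
      using letter_in_block[OF k, of w v] by metis
    with i k assms(2) show False by (metis (no_types, lifting) mem_Collect_eq nth_mem order.asym)
  qed
qed

lemma Max_landing_before_block:
  fixes x :: nat
  assumes "B \<noteq> []" and "\<forall>b\<in>set B. b < x" and "u \<noteq> [] \<longrightarrow> x < last u"
    and "x \<le> length (u @ B @ w)"
  shows "Max {i. i < length u + length B \<and>
      x < letter (u @ B @ w) i \<and> letter (u @ B @ w) (i + 1) < x} = length u"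
    (is "Max ?S = _")
proof (rule Max_eqI)
  show "finite ?S" by simp
  have "letter (u @ B @ w) (length u) = (if u = [] then Suc (length (u @ B @ w)) else last u)"
    using letter_length_prefix[of u "B @ w"] by simp
  moreover have "letter (u @ B @ w) (length u + 1) = hd B"
    using letter_in_block[of 0 B u w] assms(1) by (simp add: hd_conv_nth)
  ultimately show "length u \<in> ?S" using assms by auto
next
  fix i assume i: "i \<in> ?S"
  show "i \<le> length u"
  proof (rule ccontr)
    assume "\<not> ?thesis"
    with i have k: "i - Suc (length u) < length B" and "i = Suc (length u + (i - Suc (length u)))"
      by auto
    then have "letter (u @ B @ w) i = B ! (i - Suc (length u))"
      using letter_in_block[OF k, of u w] by metis
    with i k assms(2) show False by (metis (no_types, lifting) mem_Collect_eq nth_mem order.asym)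
  qed
qed

lemma phi'_double_descent:
  assumes "distinct (u @ x # B @ v)" and "hoppable u x B v"
    and "B \<noteq> []" and "x \<le> length (u @ x # B @ v)"
  shows "phi' x (u @ x # B @ v) = u @ B @ x # v"
proof -
  let ?xs = "u @ x # B @ v"
  have pos: "pos ?xs x = Suc (length u)" using pos_append_Cons assms(1) by blast
  have "double_descent ?xs x"
    using letter_around_pos[OF assms(1)] assms(2-4) by (auto simp: double_descent_def hoppable_def)
  moreover have "Min {i. pos ?xs x < i \<and> i \<le> length ?xs \<and> letter ?xs i < x \<and> x < letter ?xs (i + 1)}
      = Suc (length u + length B)"
    using Min_landing_after_block[of B x v "u @ [x]"] assms(2-4) pos by (simp add: hoppable_def)
  moreover have "remove1 x ?xs = u @ B @ v"
    using assms(2) by (simp add: hoppable_def remove1_append)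
  ultimately show ?thesis by (simp add: phi'_def Let_def)
qed

lemma phi'_double_ascent:
  assumes "distinct (u @ B @ x # v)" and "hoppable u x B v"
    and "B \<noteq> []" and "x \<le> length (u @ B @ x # v)"
  shows "phi' x (u @ B @ x # v) = u @ x # B @ v"
proof -
  let ?xs = "u @ B @ x # v"
  have pos: "pos ?xs x = Suc (length u + length B)"
    using pos_append_Cons[of "u @ B" x v] assms(1) by simp
  have "\<not> double_descent ?xs x" "double_ascent ?xs x"
    using letter_around_pos[of "u @ B" x v] assms
    by (auto simp: double_descent_def double_ascent_def hoppable_def)
  moreover have "Max {i. i + 1 < pos ?xs x \<and> letter ?xs i > x \<and> x > letter ?xs (i + 1)} = length u"
    using Max_landing_before_block[of B x u "x # v"] assms(2-4) pos by (simp add: hoppable_def)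
  moreover have "remove1 x ?xs = u @ B @ v"
    using assms(1) by (simp add: remove1_append)
  ultimately show ?thesis by (simp add: phi'_def Let_def)
qed

lemma split_lower_prefix:
  fixes x :: "'a::linorder"
  assumes "x \<notin> set ys" and "ys \<noteq> []" and "hd ys < x"
  obtains B v where "ys = B @ v" and "B \<noteq> []" and "\<forall>b\<in>set B. b < x"
    and "v \<noteq> [] \<longrightarrow> x < hd v"
proof
  let ?v = "dropWhile (\<lambda>y. y < x) ys"
  show "ys = takeWhile (\<lambda>y. y < x) ys @ ?v" by simp
  show "takeWhile (\<lambda>y. y < x) ys \<noteq> []" using assms(2,3) by (cases ys) auto
  show "\<forall>b\<in>set (takeWhile (\<lambda>y. y < x) ys). b < x" by (auto dest: set_takeWhileD)
  show "?v \<noteq> [] \<longrightarrow> x < hd ?v"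
  proof
    assume "?v \<noteq> []"
    then have "hd ?v \<in> set ys" and "\<not> hd ?v < x"
      using hd_in_set set_dropWhileD hd_dropWhile by metis+
    with assms(1) show "x < hd ?v" by (metis linorder_neqE)
  qed
qed

lemma split_lower_suffix:
  fixes x :: "'a::linorder"
  assumes "x \<notin> set ys" and "ys \<noteq> []" and "last ys < x"
  obtains u B where "ys = u @ B" and "B \<noteq> []" and "\<forall>b\<in>set B. b < x"
    and "u \<noteq> [] \<longrightarrow> x < last u"
proof -
  obtain B v where "rev ys = B @ v" "B \<noteq> []" "\<forall>b\<in>set B. b < x" "v \<noteq> [] \<longrightarrow> x < hd v"
    using split_lower_prefix[of x "rev ys"] assms by (auto simp: hd_rev)
  moreover from this(1) have "ys = rev v @ rev B" by (metis rev_append rev_rev_ident)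
  ultimately show thesis using that[of "rev v" "rev B"] by (auto simp: last_rev)
qed

lemma phi'_cases:
  assumes "xs \<in> perms n" and "x \<in> {1..n}"
  obtains "phi' x xs = xs"
  | u B v where "hoppable u x B v" "xs = u @ x # B @ v" "phi' x xs = u @ B @ x # v"
  | u B v where "hoppable u x B v" "xs = u @ B @ x # v" "phi' x xs = u @ x # B @ v"
proof -
  have dist: "distinct xs" and "set xs = {1..n}" using assms(1) by (auto simp: perms_def)
  then have x_le: "x \<le> length xs" using assms(2) distinct_card by fastforce
  obtain \<alpha> \<gamma> where xs: "xs = \<alpha> @ x # \<gamma>"
    using split_list[of x xs] \<open>set xs = {1..n}\<close> assms(2) by auto
  have "x \<notin> set \<alpha>" "x \<notin> set \<gamma>" using dist xs by auto
  note before = letter_around_pos(1)[of \<alpha> x \<gamma>, folded xs, OF dist]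
    and after = letter_around_pos(2)[of \<alpha> x \<gamma>, folded xs, OF dist]
  consider "double_descent xs x" | "double_ascent xs x"
    | "\<not> double_descent xs x" "\<not> double_ascent xs x" by blast
  then show thesis
  proof cases
    case 1
    have "\<gamma> \<noteq> []" "hd \<gamma> < x" "\<alpha> \<noteq> [] \<longrightarrow> x < last \<alpha>"
      using 1 before after x_le by (auto simp: double_descent_def split: if_splits)
    moreover obtain B v where "\<gamma> = B @ v" "B \<noteq> []" "\<forall>b\<in>set B. b < x" "v \<noteq> [] \<longrightarrow> x < hd v"
      using split_lower_prefix[OF \<open>x \<notin> set \<gamma>\<close>] calculation by metis
    ultimately have "hoppable \<alpha> x B v" "B \<noteq> []" "xs = \<alpha> @ x # B @ v"
      using \<open>x \<notin> set \<alpha>\<close> \<open>x \<notin> set \<gamma>\<close> xs by (auto simp: hoppable_def)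
    with that(2) phi'_double_descent dist x_le show thesis by metis
  next
    case 2
    have "\<alpha> \<noteq> []" "last \<alpha> < x" "\<gamma> \<noteq> [] \<longrightarrow> x < hd \<gamma>"
      using 2 before after x_le by (auto simp: double_ascent_def split: if_splits)
    moreover obtain u B where "\<alpha> = u @ B" "B \<noteq> []" "\<forall>b\<in>set B. b < x" "u \<noteq> [] \<longrightarrow> x < last u"
      using split_lower_suffix[OF \<open>x \<notin> set \<alpha>\<close>] calculation by metis
    ultimately have "hoppable u x B \<gamma>" "B \<noteq> []" "xs = u @ B @ x # \<gamma>"
      using \<open>x \<notin> set \<alpha>\<close> \<open>x \<notin> set \<gamma>\<close> xs by (auto simp: hoppable_def)
    with that(3) phi'_double_ascent dist x_le show thesis by metis
  next
    case 3
    with that(1) show thesis by (simp add: phi'_def)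
  qed
qed

lemma phi'_preserves_perms_and_stats:
  assumes "xs \<in> perms n" and "x \<in> {1..n}"
  shows "phi' x xs \<in> perms n \<and> st_2_31 (phi' x xs) = st_2_31 xs \<and> st_13_2 (phi' x xs) = st_13_2 xs"
  using assms
proof (cases rule: phi'_cases)
  case (2 u B v)
  then show ?thesis using assms(1) hop_preserves_stats[of u x B v] by (auto simp: perms_def)
next
  case (3 u B v)
  then show ?thesis using assms(1) hop_preserves_stats[of u x B v] by (auto simp: perms_def)
qed (simp add: assms(1))

theorem theorem5p1:
  fixes n :: nat and \<pi> \<sigma> :: "nat list"
  assumes "\<pi> \<in> perms n" and "\<sigma> \<in> fs_orbit n \<pi>"
  shows "st_2_31 \<sigma> = st_2_31 \<pi> \<and> st_13_2 \<sigma> = st_13_2 \<pi>"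
proof -
  have "(fs_step n)\<^sup>*\<^sup>* \<pi> \<sigma>" using assms(2) by (simp add: fs_orbit_def)
  then have "\<sigma> \<in> perms n \<and> st_2_31 \<sigma> = st_2_31 \<pi> \<and> st_13_2 \<sigma> = st_13_2 \<pi>"
  proof (induction rule: rtranclp_induct)
    case base
    then show ?case using assms(1) by simp
  next
    case (step \<tau> \<rho>)
    then show ?case using phi'_preserves_perms_and_stats by (auto simp: fs_step_def)
  qed
  then show ?thesis by simp
qed

end
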